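(* For any lasso automaton $X=(X_1,X_2,\delta_1,\delta_2,\delta_3)$, the largest set of equations $\mathsf{Eq}(X)=(E_1,E_2)$ satisfied by $X$ is a congruence on $(\Sigma^\ast,\Sigma^{\ast+})$, in the sense that $E_1$ is compatible with concatenation on $\Sigma^\ast$ (i.e. is a monoid congruence) and the pair respects the operation $\times:\Sigma^\ast\times\Sigma^{\ast+}\to\Sigma^{\ast+}$, $w\times(u,v)=(wu,v)$: if $(w,w')\in E_1$ and $((u,v),(u',v'))\in E_2$ then $((wu,v),(w'u',v'))\in E_2$.
   Context: $\Sigma$ is a finite alphabet, $\Sigma^{\ast+}=\Sigma^\ast\times\Sigma^+$ the lassos. A lasso automaton is $(X_1,X_2,\delta_1,\delta_2,\delta_3)$ with disjoint $X_1,X_2$, $\delta_1:X_1\times\Sigma\to X_1$, $\delta_2:X_1\times\Sigma\to X_2$, $\delta_3:X_2\times\Sigma\to X_2$; extend $\delta_1,\delta_3$ to words, set $\delta_\circ(x,av)=\delta_3(\delta_2(x,a),v)$ for $x\in X_1$ and $\delta(x,(u,v))=\delta_\circ(\delta_1(x,u),v)$. The initial lasso automaton has carrier $(\Sigma^\ast,\Sigma^{\ast+})$ with transitions $\sigma_1(u,a)=ua$, $\sigma_2(u,a)=(u,a)$, $\sigma_3((u,v),a)=(u,va)$. A set of equations is a bisimulation equivalence $E=(E_1,E_2)$ on this automaton: equivalence relations $E_1$ on $\Sigma^\ast$ and $E_2$ on $\Sigma^{\ast+}$ with $(u,u')\in E_1\Rightarrow(ua,u'a)\in E_1$ and $((u,a),(u',a))\in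 E_2$, and $((u,v),(u',v'))\in E_2\Rightarrow((u,va),(u',v'a))\in E_2$, for all $a\in\Sigma$. $X$ satisfies $E$ if for all $x\in X_1$: $\delta_1(x,u)=\delta_1(x,v)$ for all $(u,v)\in E_1$ and $\delta(x,(u,v))=\delta(x,(u',v'))$ for all $((u,v),(u',v'))\in E_2$. $\mathsf{Eq}(X)$ denotes the largest set of equations satisfied by $X$. *)

theory Defs
  imports Main
begin

text \<open>A lasso automaton has carriers X1 :: 's set and X2 :: 't set (disjointness is
automatic since they live in different types) and transition functions closed on them.\<close>

definition lassos :: "('a list \<times> 'a list) set" where
  "lassos = {(u, v). v \<noteq> []}"

definition lasso_automaton ::
  "'s set \<Rightarrow> 't set \<Rightarrow> ('s \<Rightarrow> 'a \<Rightarrow> 's) \<Rightarrow> ('s \<Rightarrow> 'a \<Rightarrow> 't) \<Rightarrow> ('t \<Rightarrow> 'a \<Rightarrow> 't) \<Rightarrow> bool" where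
  "lasso_automaton X1 X2 d1 d2 d3 \<longleftrightarrow>
     (\<forall>x\<in>X1. \<forall>a. d1 x a \<in> X1 \<and> d2 x a \<in> X2) \<and> (\<forall>y\<in>X2. \<forall>a. d3 y a \<in> X2)"

definition ext1 :: "('s \<Rightarrow> 'a \<Rightarrow> 's) \<Rightarrow> 's \<Rightarrow> 'a list \<Rightarrow> 's" where
  "ext1 d1 x u = foldl d1 x u"

definition ext3 :: "('t \<Rightarrow> 'a \<Rightarrow> 't) \<Rightarrow> 't \<Rightarrow> 'a list \<Rightarrow> 't" where
  "ext3 d3 y v = foldl d3 y v"

fun delta_circ :: "('s \<Rightarrow> 'a \<Rightarrow> 't) \<Rightarrow> ('t \<Rightarrow> 'a \<Rightarrow> 't) \<Rightarrow> 's \<Rightarrow> 'a list \<Rightarrow> 't" where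
  "delta_circ d2 d3 x (a # v) = ext3 d3 (d2 x a) v"
| "delta_circ d2 d3 x [] = undefined"

definition delta ::
  "('s \<Rightarrow> 'a \<Rightarrow> 's) \<Rightarrow> ('s \<Rightarrow> 'a \<Rightarrow> 't) \<Rightarrow> ('t \<Rightarrow> 'a \<Rightarrow> 't) \<Rightarrow> 's \<Rightarrow> 'a list \<times> 'a list \<Rightarrow> 't" where
  "delta d1 d2 d3 x uv = delta_circ d2 d3 (ext1 d1 x (fst uv)) (snd uv)"

text \<open>A set of equations: a bisimulation equivalence on the initial lasso automaton.\<close>
definition is_equations ::
  "('a list \<times> 'a list) set \<times> (('a list \<times> 'a list) \<times> ('a list \<times> 'a list)) set \<Rightarrow> bool" where
  "is_equations E \<longleftrightarrow>
     equiv UNIV (fst E) \<and> equiv lassos (snd E) \<and>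
     (\<forall>u u' a. (u, u') \<in> fst E \<longrightarrow> (u @ [a], u' @ [a]) \<in> fst E \<and> ((u, [a]), (u', [a])) \<in> snd E) \<and>
     (\<forall>u v u' v' a. ((u, v), (u', v')) \<in> snd E \<longrightarrow> ((u, v @ [a]), (u', v' @ [a])) \<in> snd E)"

definition satisfies ::
  "'s set \<Rightarrow> ('s \<Rightarrow> 'a \<Rightarrow> 's) \<Rightarrow> ('s \<Rightarrow> 'a \<Rightarrow> 't) \<Rightarrow> ('t \<Rightarrow> 'a \<Rightarrow> 't) \<Rightarrow>
   ('a list \<times> 'a list) set \<times> (('a list \<times> 'a list) \<times> ('a list \<times> 'a list)) set \<Rightarrow> bool" where
  "satisfies X1 d1 d2 d3 E \<longleftrightarrow>
     (\<forall>x\<in>X1. (\<forall>(u, v)\<in>fst E. ext1 d1 x u = ext1 d1 x v) \<and>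
             (\<forall>(p, q)\<in>snd E. delta d1 d2 d3 x p = delta d1 d2 d3 x q))"

definition Eq ::
  "'s set \<Rightarrow> ('s \<Rightarrow> 'a \<Rightarrow> 's) \<Rightarrow> ('s \<Rightarrow> 'a \<Rightarrow> 't) \<Rightarrow> ('t \<Rightarrow> 'a \<Rightarrow> 't) \<Rightarrow>
   ('a list \<times> 'a list) set \<times> (('a list \<times> 'a list) \<times> ('a list \<times> 'a list)) set" where
  "Eq X1 d1 d2 d3 = (THE E. is_equations E \<and> satisfies X1 d1 d2 d3 E \<and>
      (\<forall>E'. is_equations E' \<and> satisfies X1 d1 d2 d3 E' \<longrightarrow> fst E' \<subseteq> fst E \<and> snd E' \<subseteq> snd E))"

end

theory Submission
  imports Defs
begin

text \<open>\<open>Eq(X)\<close> is the pair of kernels of \<open>u \<mapsto> \<delta>\<^sub>1(-, u)\<close> and \<open>(u, v) \<mapsto> \<delta>(-, (u, v))\<close> on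
\<open>X\<^sub>1\<close>: these kernels form a set of equations satisfied by \<open>X\<close>, and every satisfied set of
equations lies inside them. Congruence then follows from
\<open>\<delta>\<^sub>1(x, wu) = \<delta>\<^sub>1(\<delta>\<^sub>1(x, w), u)\<close> and \<open>\<delta>(x, (wu, v)) = \<delta>(\<delta>\<^sub>1(x, w), (u, v))\<close>,
because \<open>\<delta>\<^sub>1(x, w)\<close> stays in \<open>X\<^sub>1\<close>.\<close>

definition word_kernel :: "'s set \<Rightarrow> ('s \<Rightarrow> 'a \<Rightarrow> 's) \<Rightarrow> ('a list \<times> 'a list) set" where
  "word_kernel X1 d1 = {(u, u'). \<forall>x\<in>X1. ext1 d1 x u = ext1 d1 x u'}"

definition lasso_kernel ::
  "'s set \<Rightarrow> ('s \<Rightarrow> 'a \<Rightarrow> 's) \<Rightarrow> ('s \<Rightarrow> 'a \<Rightarrow> 't) \<Rightarrow> ('t \<Rightarrow> 'a \<Rightarrow> 't) \<Rightarrow>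
   (('a list \<times> 'a list) \<times> ('a list \<times> 'a list)) set" where
  "lasso_kernel X1 d1 d2 d3 =
     {(p, q). p \<in> lassos \<and> q \<in> lassos \<and> (\<forall>x\<in>X1. delta d1 d2 d3 x p = delta d1 d2 d3 x q)}"

lemma ext1_snoc: "ext1 d1 x (u @ [a]) = d1 (ext1 d1 x u) a"
  by (simp add: ext1_def)

lemma ext1_append: "ext1 d1 x (w @ u) = ext1 d1 (ext1 d1 x w) u"
  by (simp add: ext1_def)

lemma ext1_closed:
  assumes "\<And>x a. x \<in> X1 \<Longrightarrow> d1 x a \<in> X1" and "x \<in> X1"
  shows "ext1 d1 x w \<in> X1"
  using assms(2) unfolding ext1_def by (induction w arbitrary: x) (auto intro: assms(1))

lemma delta_single: "delta d1 d2 d3 x (u, [a]) = d2 (ext1 d1 x u) a"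
  by (simp add: delta_def ext3_def)

lemma delta_snoc: "v \<noteq> [] \<Longrightarrow> delta d1 d2 d3 x (u, v @ [a]) = d3 (delta d1 d2 d3 x (u, v)) a"
  by (cases v) (simp_all add: delta_def ext3_def)

lemma delta_append_stem: "delta d1 d2 d3 x (w @ u, v) = delta d1 d2 d3 (ext1 d1 x w) (u, v)"
  by (simp add: delta_def ext1_append)

lemma is_equations_kernels: "is_equations (word_kernel X1 d1, lasso_kernel X1 d1 d2 d3)"
  unfolding is_equations_def fst_conv snd_conv
proof (intro conjI allI impI)
  show "equiv UNIV (word_kernel X1 d1)"
    by (auto simp: equiv_def refl_on_def sym_def trans_def word_kernel_def)
  show "equiv lassos (lasso_kernel X1 d1 d2 d3)"
    by (auto simp: equiv_def refl_on_def sym_def trans_def lasso_kernel_def)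
next
  fix u u' a assume "(u, u') \<in> word_kernel X1 d1"
  then show "(u @ [a], u' @ [a]) \<in> word_kernel X1 d1"
    and "((u, [a]), (u', [a])) \<in> lasso_kernel X1 d1 d2 d3"
    by (auto simp: word_kernel_def lasso_kernel_def ext1_snoc delta_single lassos_def)
next
  fix u v u' v' a assume "((u, v), (u', v')) \<in> lasso_kernel X1 d1 d2 d3"
  then show "((u, v @ [a]), (u', v' @ [a])) \<in> lasso_kernel X1 d1 d2 d3"
    by (auto simp: lasso_kernel_def delta_snoc lassos_def)
qed

lemma satisfies_kernels: "satisfies X1 d1 d2 d3 (word_kernel X1 d1, lasso_kernel X1 d1 d2 d3)"
  by (auto simp: satisfies_def word_kernel_def lasso_kernel_def)

text \<open>The hypothesis \<open>is_equations E\<close> is needed only to get \<open>snd E \<subseteq> lassos \<times> lassos\<close>.\<close>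

lemma satisfies_subset_kernels:
  assumes "is_equations E" and "satisfies X1 d1 d2 d3 E"
  shows "fst E \<subseteq> word_kernel X1 d1 \<and> snd E \<subseteq> lasso_kernel X1 d1 d2 d3"
  using assms
  unfolding is_equations_def satisfies_def word_kernel_def lasso_kernel_def equiv_def refl_on_def
  by fast

lemma Eq_eq_kernels: "Eq X1 d1 d2 d3 = (word_kernel X1 d1, lasso_kernel X1 d1 d2 d3)"
  unfolding Eq_def
proof (rule the_equality)
  show "is_equations (word_kernel X1 d1, lasso_kernel X1 d1 d2 d3)
    \<and> satisfies X1 d1 d2 d3 (word_kernel X1 d1, lasso_kernel X1 d1 d2 d3)
    \<and> (\<forall>E'. is_equations E' \<and> satisfies X1 d1 d2 d3 E' \<longrightarrow>
          fst E' \<subseteq> fst (word_kernel X1 d1, lasso_kernel X1 d1 d2 d3)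
        \<and> snd E' \<subseteq> snd (word_kernel X1 d1, lasso_kernel X1 d1 d2 d3))"
    using is_equations_kernels satisfies_kernels satisfies_subset_kernels unfolding fst_conv snd_conv by blast
next
  fix E assume E: "is_equations E \<and> satisfies X1 d1 d2 d3 E
    \<and> (\<forall>E'. is_equations E' \<and> satisfies X1 d1 d2 d3 E' \<longrightarrow> fst E' \<subseteq> fst E \<and> snd E' \<subseteq> snd E)"
  then have "word_kernel X1 d1 \<subseteq> fst E" "lasso_kernel X1 d1 d2 d3 \<subseteq> snd E"
    using is_equations_kernels satisfies_kernels by fastforce+
  moreover have "fst E \<subseteq> word_kernel X1 d1" "snd E \<subseteq> lasso_kernel X1 d1 d2 d3"
    using E satisfies_subset_kernels by blast+
  ultimately show "E = (word_kernel X1 d1, lasso_kernel X1 d1 d2 d3)"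
    by (simp add: prod_eq_iff)
qed

lemma word_kernel_append:
  assumes closed: "\<And>x a. x \<in> X1 \<Longrightarrow> d1 x a \<in> X1"
    and "(w, w') \<in> word_kernel X1 d1" and "(u, u') \<in> word_kernel X1 d1"
  shows "(w @ u, w' @ u') \<in> word_kernel X1 d1"
proof -
  have "ext1 d1 x (w @ u) = ext1 d1 x (w' @ u')" if x: "x \<in> X1" for x
  proof -
    have "ext1 d1 x (w @ u) = ext1 d1 (ext1 d1 x w') u"
      using assms(2) x by (simp add: word_kernel_def ext1_append)
    also have "\<dots> = ext1 d1 x (w' @ u')"
      using assms(3) ext1_closed[of X1 d1, OF closed x] by (simp add: word_kernel_def ext1_append)
    finally show ?thesis .
  qed
  then show ?thesis by (simp add: word_kernel_def)
qed

lemma lasso_kernel_prepend: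
  assumes closed: "\<And>x a. x \<in> X1 \<Longrightarrow> d1 x a \<in> X1"
    and "(w, w') \<in> word_kernel X1 d1" and "((u, v), (u', v')) \<in> lasso_kernel X1 d1 d2 d3"
  shows "((w @ u, v), (w' @ u', v')) \<in> lasso_kernel X1 d1 d2 d3"
proof -
  have "delta d1 d2 d3 x (w @ u, v) = delta d1 d2 d3 x (w' @ u', v')" if x: "x \<in> X1" for x
  proof -
    have "delta d1 d2 d3 x (w @ u, v) = delta d1 d2 d3 (ext1 d1 x w') (u, v)"
      using assms(2) x by (simp add: word_kernel_def delta_append_stem)
    also have "\<dots> = delta d1 d2 d3 x (w' @ u', v')"
      using assms(3) ext1_closed[of X1 d1, OF closed x] by (simp add: lasso_kernel_def delta_append_stem)
    finally show ?thesis .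
  qed
  with assms(3) show ?thesis by (simp add: lasso_kernel_def lassos_def)
qed

theorem mainTheorem11:
  fixes X1 :: "'s set" and X2 :: "'t set"
    and d1 :: "'s \<Rightarrow> 'a::finite \<Rightarrow> 's" and d2 :: "'s \<Rightarrow> 'a \<Rightarrow> 't" and d3 :: "'t \<Rightarrow> 'a \<Rightarrow> 't"
  assumes "lasso_automaton X1 X2 d1 d2 d3"
    and "Eq X1 d1 d2 d3 = (E1, E2)"
  shows "equiv UNIV E1
    \<and> (\<forall>w w' u u'. (w, w') \<in> E1 \<and> (u, u') \<in> E1 \<longrightarrow> (w @ u, w' @ u') \<in> E1)
    \<and> (\<forall>w w' u v u' v'. (w, w') \<in> E1 \<and> ((u, v), (u', v')) \<in> E2
          \<longrightarrow> ((w @ u, v), (w' @ u', v')) \<in> E2)"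
proof -
  have E1: "E1 = word_kernel X1 d1" and E2: "E2 = lasso_kernel X1 d1 d2 d3"
    using assms(2) by (simp_all add: Eq_eq_kernels)
  have closed: "\<And>x a. x \<in> X1 \<Longrightarrow> d1 x a \<in> X1"
    using assms(1) by (simp add: lasso_automaton_def)
  have "equiv UNIV E1"
    using is_equations_kernels[of X1 d1 d2 d3] E1 by (simp add: is_equations_def)
  then show ?thesis
    unfolding E1 E2 using word_kernel_append[of X1 d1, OF closed] lasso_kernel_prepend[of X1 d1, OF closed] by blast
qed

end
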